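(* Let $X$ be a continuous vector field on $\mathbb{S}^1$ of finite width $w(X)$, with support function $\phi_X$. Assume that $\mathbb{D}^2\times\{0\}$ is a support plane of $\mathrm{gr}(\phi_X^-)$ at $(0,0,\phi_X^-(0,0))$, i.e. $\phi_X^-(\eta)\ge0$ for all $\eta\in\mathbb{D}^2$ and $\phi_X^-(0,0)=0$. Then $\phi_X(z)\le2w(X)$ for all $z\in\mathbb{S}^1$.
   Context: $\mathbb{D}^2$ is the open unit disk in $\mathbb{R}^2$, $\mathbb{S}^1$ its boundary. A vector field $X$ on $\mathbb{S}^1$ is written $X(z)=iz\phi_X(z)$ with $\phi_X:\mathbb{S}^1\to\mathbb{R}$ its support function. For $\eta\in\overline{\mathbb{D}^2}$, $\phi_X^-(\eta)=\sup\{a(\eta):a:\mathbb{R}^2\to\mathbb{R}\text{ affine},a|_{\mathbb{S}^1}\le\phi_X\}$, $\phi_X^+(\eta)=\inf\{a(\eta):a\text{ affine},a|_{\mathbb{S}^1}\ge\phi_X\}$. The width is $w(X)=\sup_{\eta\in\mathbb{D}^2}\frac{\phi_X^+(\eta)-\phi_X^-(\eta)}{\sqrt{1-|\eta|^2}}$. *)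

theory Defs
  imports "HOL-Analysis.Analysis"
begin

text \<open>We identify \<open>\<real>\<^sup>2\<close> with \<open>\<complex>\<close>.\<close>

definition tangent_field :: "(complex \<Rightarrow> complex) \<Rightarrow> bool" where
  "tangent_field X \<longleftrightarrow> (\<forall>z\<in>sphere 0 1. \<exists>t::real. X z = \<i> * z * of_real t)"

text \<open>Support function: \<open>\<phi>_X(z) = X(z)/(\<i> z)\<close> (real part, which is all of it for tangent fields).\<close>
definition support_fun :: "(complex \<Rightarrow> complex) \<Rightarrow> complex \<Rightarrow> real" where
  "support_fun X z = Re (X z / (\<i> * z))"

definition affine_fun :: "(complex \<Rightarrow> real) \<Rightarrow> bool" where
  "affine_fun a \<longleftrightarrow> (\<exists>c b1 b2. \<forall>x. a x = c + b1 * Re x + b2 * Im x)"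

definition phi_minus :: "(complex \<Rightarrow> complex) \<Rightarrow> complex \<Rightarrow> real" where
  "phi_minus X \<eta> = Sup {a \<eta> | a. affine_fun a \<and> (\<forall>z\<in>sphere 0 1. a z \<le> support_fun X z)}"

definition phi_plus :: "(complex \<Rightarrow> complex) \<Rightarrow> complex \<Rightarrow> real" where
  "phi_plus X \<eta> = Inf {a \<eta> | a. affine_fun a \<and> (\<forall>z\<in>sphere 0 1. a z \<ge> support_fun X z)}"

definition width :: "(complex \<Rightarrow> complex) \<Rightarrow> ereal" where
  "width X = (SUP \<eta>\<in>ball 0 1. ereal ((phi_plus X \<eta> - phi_minus X \<eta>) / sqrt (1 - (cmod \<eta>)\<^sup>2)))"

end

theory Submission
  imports Defs
begin

text \<open>Every affine minorant
  of \<open>\<phi>\<^sub>X\<close> lies below \<open>a\<close> at \<open>z\<close> and \<open>-z\<close>, hence on the diameter between them; so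
  \<open>0 \<le> \<phi>\<^sub>X\<^sup>- \<le> a\<close> on the open disk and, by continuity, \<open>a(-z) \<ge> 0\<close>. Therefore
  \<open>a(0) = (a(z) + a(-z))/2 \<ge> \<phi>\<^sub>X(z)/2\<close>, i.e. \<open>\<phi>\<^sub>X\<^sup>+(0) \<ge> \<phi>\<^sub>X(z)/2\<close>, while the width
  at \<open>\<eta> = 0\<close> bounds \<open>\<phi>\<^sub>X\<^sup>+(0) - \<phi>\<^sub>X\<^sup>-(0) = \<phi>\<^sub>X\<^sup>+(0)\<close>.
  Continuity of \<open>X\<close> only serves to make \<open>\<phi>\<^sub>X\<close> bounded, so that the \<open>Sup\<close> and \<open>Inf\<close>
  defining \<open>\<phi>\<^sub>X\<^sup>\<plusminus>\<close> range over nonempty sets.\<close>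

lemma affine_fun_const: "affine_fun (\<lambda>_. k)"
  unfolding affine_fun_def by (intro exI[of _ k] exI[of _ 0]) simp

lemma affine_fun_on_line:
  assumes "affine_fun a"
  shows "a (of_real s * z) = (1 + s) / 2 * a z + (1 - s) / 2 * a (- z)"
proof -
  obtain c b1 b2 where "\<And>x. a x = c + b1 * Re x + b2 * Im x"
    using assms unfolding affine_fun_def by blast
  then show ?thesis by (simp add: field_simps)
qed

lemma continuous_on_affine_fun:
  assumes "affine_fun a"
  shows "continuous_on S a"
proof -
  obtain c b1 b2 where "a = (\<lambda>x. c + b1 * Re x + b2 * Im x)"
    using assms unfolding affine_fun_def by blast
  then show ?thesis by (auto intro!: continuous_intros)
qed

lemma affine_fun_le_on_diameter:
  assumes "affine_fun a" "affine_fun b" "b z \<le> a z" "b (- z) \<le> a (- z)" "\<bar>s\<bar> \<le> 1"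
  shows "b (of_real s * z) \<le> a (of_real s * z)"
proof -
  have "(1 + s) / 2 * b z + (1 - s) / 2 * b (- z) \<le> (1 + s) / 2 * a z + (1 - s) / 2 * a (- z)"
    using assms(3-5) by (intro add_mono mult_left_mono) auto
  then show ?thesis
    using affine_fun_on_line[OF assms(1)] affine_fun_on_line[OF assms(2)] by simp
qed

lemma cball_polar_decomposition:
  fixes x :: complex
  assumes "x \<in> cball 0 1"
  obtains u s where "u \<in> sphere 0 1" "\<bar>s\<bar> \<le> 1" "x = of_real s * u"
proof (cases "x = 0")
  case True
  then show ?thesis using that[of 1 0] by simp
next
  case False
  then have "x = of_real (cmod x) * sgn x"
    by (simp add: sgn_div_norm scaleR_conv_of_real)
  then show ?thesis
    using that[of "sgn x" "cmod x"] assms False by (simp add: norm_sgn)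
qed

lemma continuous_on_support_fun:
  assumes "continuous_on S X" "0 \<notin> S"
  shows "continuous_on S (support_fun X)"
  unfolding support_fun_def using assms by (intro continuous_intros) auto

lemma phi_minus_le_affine_majorant:
  assumes "bdd_below (support_fun X ` sphere 0 1)" "affine_fun a"
    and "\<forall>z\<in>sphere 0 1. support_fun X z \<le> a z" "x \<in> cball 0 1"
  shows "phi_minus X x \<le> a x"
proof -
  obtain k where k: "\<forall>z\<in>sphere 0 1. k \<le> support_fun X z"
    using assms(1) by (auto simp: bdd_below_def)
  obtain u s where u: "u \<in> sphere 0 1" "- u \<in> sphere 0 1" and s: "\<bar>s\<bar> \<le> 1"
    and x: "x = of_real s * u"
    using cball_polar_decomposition[OF assms(4)] by (metis norm_minus_cancel mem_sphere_0)
  show ?thesis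
    unfolding phi_minus_def
  proof (rule cSup_least)
    show "{b x |b. affine_fun b \<and> (\<forall>z\<in>sphere 0 1. b z \<le> support_fun X z)} \<noteq> {}"
      using affine_fun_const k by blast
  next
    fix y assume "y \<in> {b x |b. affine_fun b \<and> (\<forall>z\<in>sphere 0 1. b z \<le> support_fun X z)}"
    then obtain b where "y = b x" "affine_fun b" "\<forall>z\<in>sphere 0 1. b z \<le> support_fun X z"
      by blast
    with assms(2,3) u s x show "y \<le> a x"
      by (metis affine_fun_le_on_diameter order_trans)
  qed
qed

lemma affine_majorant_nonneg_on_cball:
  assumes "bdd_below (support_fun X ` sphere 0 1)" "\<forall>\<eta>\<in>ball 0 1. 0 \<le> phi_minus X \<eta>"
    and "affine_fun a" "\<forall>z\<in>sphere 0 1. support_fun X z \<le> a z" "x \<in> cball 0 1"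
  shows "0 \<le> a x"
proof -
  have "0 \<le> a y" if "y \<in> ball 0 1" for y
    using that assms(2) phi_minus_le_affine_majorant[OF assms(1,3,4), of y]
    by (meson ball_subset_cball order_trans subsetD)
  then show ?thesis
    using continuous_ge_on_closure[of "ball 0 1" a x 0] continuous_on_affine_fun[OF assms(3)] assms(5)
    by simp
qed

lemma support_fun_le_twice_phi_plus:
  assumes "bounded (support_fun X ` sphere 0 1)" "\<forall>\<eta>\<in>ball 0 1. 0 \<le> phi_minus X \<eta>"
    and "z \<in> sphere 0 1"
  shows "support_fun X z \<le> 2 * phi_plus X 0"
proof -
  obtain k where k: "\<forall>z\<in>sphere 0 1. support_fun X z \<le> k"
    using bounded_imp_bdd_above[OF assms(1)] by (auto simp: bdd_above_def)
  have "support_fun X z / 2 \<le> phi_plus X 0"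
    unfolding phi_plus_def
  proof (rule cInf_greatest)
    show "{a 0 |a. affine_fun a \<and> (\<forall>z\<in>sphere 0 1. support_fun X z \<le> a z)} \<noteq> {}"
      using affine_fun_const k by blast
  next
    fix y assume "y \<in> {a 0 |a. affine_fun a \<and> (\<forall>z\<in>sphere 0 1. support_fun X z \<le> a z)}"
    then obtain a where a: "y = a 0" "affine_fun a" "\<forall>z\<in>sphere 0 1. support_fun X z \<le> a z"
      by blast
    have "0 \<le> a (- z)"
      using affine_majorant_nonneg_on_cball[OF bounded_imp_bdd_below[OF assms(1)] assms(2) a(2,3)]
        assms(3) by simp
    moreover have "a 0 = (a z + a (- z)) / 2"
      using affine_fun_on_line[OF a(2), of 0 z] by simp
    ultimately show "support_fun X z / 2 \<le> y"
      using a assms(3) by fastforce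
  qed
  then show ?thesis by simp
qed

theorem lemma6p4:
  fixes X :: "complex \<Rightarrow> complex"
  assumes "continuous_on (sphere 0 1) X"
    and "tangent_field X"
    and "width X < \<infinity>"
    and "\<forall>\<eta>\<in>ball 0 1. phi_minus X \<eta> \<ge> 0"
    and "phi_minus X 0 = 0"
  shows "\<forall>z\<in>sphere 0 1. ereal (support_fun X z) \<le> 2 * width X"
proof
  fix z :: complex assume z: "z \<in> sphere 0 1"
  have "bounded (support_fun X ` sphere 0 1)"
    using continuous_on_support_fun[OF assms(1)]
    by (intro compact_imp_bounded compact_continuous_image) auto
  then have support_le: "support_fun X z \<le> 2 * phi_plus X 0"
    using assms(4) z by (rule support_fun_le_twice_phi_plus)
  have width_ge: "ereal (phi_plus X 0) \<le> width X"
    using SUP_upper[of 0 "ball 0 1" "\<lambda>\<eta>. ereal ((phi_plus X \<eta> - phi_minus X \<eta>) / sqrt (1 - (cmod \<eta>)\<^sup>2))"]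
      assms(5) unfolding width_def by simp
  have "ereal (support_fun X z) \<le> 2 * ereal (phi_plus X 0)"
    using support_le by simp
  also have "\<dots> \<le> 2 * width X"
    using width_ge by (intro ereal_mult_left_mono) auto
  finally show "ereal (support_fun X z) \<le> 2 * width X" .
qed

end
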